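(* Suppose that $d>1$, $1<p\le\infty$ and $p\le q\le pd$. Then the operator $$R_2f_0(r)=\chi_{[0,4/3)}(r)\sup_{t\in[1,2],\ t\ge3r/2}\frac1r\int_{t-r}^{t+r}|f_0(s)|\,ds$$ is bounded from $L^p(\mu_d)$ to $L^q(\mu_d)$. Moreover, $R_2$ is of strong type $(1,1)$ and weak type $(1,d)$ with respect to the measure $\mu_d$.
   Context: $\mu_d$ is the measure on $\mathbb{R}^+$ with $d\mu_d=r^{d-1}dr$. *)

theory Defs
  imports "HOL-Analysis.Analysis"
begin

definition mu :: "real \<Rightarrow> real measure" where
  "mu d = density (restrict_space lborel {0<..}) (\<lambda>r. ennreal (r powr (d - 1)))"

text \<open>Real powers of extended nonnegative reals (used with positive exponents only).\<close>
definition enn_powr :: "ennreal \<Rightarrow> real \<Rightarrow> ennreal" where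
  "enn_powr x a = (if x = \<infinity> then \<infinity> else ennreal (enn2real x powr a))"

definition Lp_norm :: "'a measure \<Rightarrow> ennreal \<Rightarrow> ('a \<Rightarrow> ennreal) \<Rightarrow> ennreal" where
  "Lp_norm M p g =
     (if p = \<infinity> then Inf {C. AE x in M. g x \<le> C}
      else enn_powr (\<integral>\<^sup>+ x. enn_powr (g x) (enn2real p) \<partial>M) (1 / enn2real p))"

definition R2 :: "(real \<Rightarrow> real) \<Rightarrow> real \<Rightarrow> ennreal" where
  "R2 f0 r = indicator {0..<4/3} r *
     (SUP t\<in>{t. 1 \<le> t \<and> t \<le> 2 \<and> 3 * r / 2 \<le> t}.
        ennreal (1 / r) * (\<integral>\<^sup>+ s\<in>{t - r..t + r}. ennreal \<bar>f0 s\<bar> \<partial>lborel))"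

end

theory Submission
  imports Defs "HOL-Probability.Essential_Supremum"
begin

(* For 0 < r < 4/3 every interval [t - r, t + r] occurring in R2 lies in [1/3, 10/3], where
   mu_d and Lebesgue measure are comparable. Splitting |f| at a height lam therefore gives
   R2 f r <= 2 lam + G(lam) / r, where G(lam) = tail_integral lborel (window f) lam is the
   integral of |f| over {|f| > lam} inside [1/3, 10/3]. For lam = 0 this is a multiple of 1/r on (0, 4/3), which is mu_d-integrable
   (strong type (1,1)) and whose superlevel sets are intervals (0, c / lam) of mu_d-measure
   (c / lam)^d / d (weak type (1,d)); for lam = ||f||_inf it is the L^inf bound.
   For 1 < p < inf, normalise ||f||_p ~ n and use the heights n 2^k: where R2 f exceeds 4 n 2^k
   we must have r < G(n 2^k) / (2 n 2^k), so (R2 f)^q is dominated by (4 n)^q on (0, 4/3) plus a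
   sum of multiples of indicators of intervals at 0. Since q <= p d, the k-th of them costs at most
   n^(q-1) 2^(k(p-1)) G(n 2^k), and the sum over k of 2^(k(p-1)) G(n 2^k) is a geometric
   layer-cake sum bounded by n^(1-p) ||f||_p^p. *)

lemma space_mu [simp]: "space (mu d) = {0<..}"
  unfolding mu_def by simp

lemma sets_mu: "A \<in> sets borel \<Longrightarrow> A \<subseteq> {0<..} \<Longrightarrow> A \<in> sets (mu d)"
  unfolding mu_def by (simp add: sets_restrict_space_iff)

lemma borel_measurable_mu: "h \<in> borel_measurable borel \<Longrightarrow> h \<in> borel_measurable (mu d)"
  unfolding mu_def by (simp add: measurable_restrict_space1)

lemma nn_integral_mu:
  assumes [measurable]: "h \<in> borel_measurable borel"
  shows "(\<integral>\<^sup>+ x. h x \<partial>mu d) = (\<integral>\<^sup>+ x. ennreal (x powr (d - 1)) * h x * indicator {0<..} x \<partial>lborel)"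
  unfolding mu_def
  by (subst nn_integral_density) (auto intro!: measurable_restrict_space1 simp: nn_integral_restrict_space)

lemma AE_lborel_of_AE_mu:
  assumes "AE x in mu d. P x"
  shows "AE x in lborel. 0 < x \<longrightarrow> P x"
proof -
  have "(\<lambda>x. ennreal (x powr (d - 1))) \<in> borel_measurable (restrict_space lborel {0<..})"
    by (rule measurable_restrict_space1) simp
  from assms[unfolded mu_def, THEN AE_density[OF this, THEN iffD1]]
  have "AE x in lborel. x \<in> {0<..} \<longrightarrow> 0 < ennreal (x powr (d - 1)) \<longrightarrow> P x"
    by (subst (asm) AE_restrict_space_iff) auto
  then show ?thesis by eventually_elim auto
qed

lemma nn_integral_mu_Ioo_powr:
  assumes "0 \<le> a" "0 < d + e"
  shows "(\<integral>\<^sup>+ r. ennreal (r powr e) * indicator {0<..<a} r \<partial>mu d) \<le> ennreal (a powr (d + e) / (d + e))"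
proof -
  have "(\<integral>\<^sup>+ r. ennreal (r powr e) * indicator {0<..<a} r \<partial>mu d)
      = (\<integral>\<^sup>+ r. ennreal (r powr (d - 1)) * (ennreal (r powr e) * indicator {0<..<a} r) * indicator {0<..} r \<partial>lborel)"
    by (rule nn_integral_mu) simp
  also have "\<dots> \<le> (\<integral>\<^sup>+ r. ennreal (r powr (d - 1 + e)) * indicator {0..a} r \<partial>lborel)"
    by (intro nn_integral_mono)
      (auto split: split_indicator simp: ennreal_mult'[symmetric] powr_add[symmetric])
  also have "\<dots> = ennreal (a powr (d - 1 + e + 1) / (d - 1 + e + 1))"
    by (intro nn_integral_has_integral_lebesgue' has_integral_powr_from_0) (use assms in auto)
  finally show ?thesis by simp
qed

lemma emeasure_mu_Ioo_le:
  assumes "0 \<le> a" "0 < d"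
  shows "emeasure (mu d) {0<..<a} \<le> ennreal (a powr d / d)"
proof -
  have "emeasure (mu d) {0<..<a} = (\<integral>\<^sup>+ r. ennreal (r powr 0) * indicator {0<..<a} r \<partial>mu d)"
    by (subst nn_integral_indicator[symmetric])
      (auto intro!: sets_mu nn_integral_cong split: split_indicator)
  also have "\<dots> \<le> ennreal (a powr d / d)"
    using nn_integral_mu_Ioo_powr[of a d 0] assms by simp
  finally show ?thesis .
qed

lemma nn_integral_Icc_le_mu:
  assumes [measurable]: "h \<in> borel_measurable borel" and "0 < a" "1 \<le> d"
  shows "(\<integral>\<^sup>+ s. h s * indicator {a..b} s \<partial>lborel) \<le> ennreal (a powr (1 - d)) * (\<integral>\<^sup>+ s. h s \<partial>mu d)"
proof -
  have "h s \<le> ennreal (a powr (1 - d)) * ennreal (s powr (d - 1)) * h s" if "a \<le> s" for s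
  proof -
    have "a powr (d - 1) \<le> s powr (d - 1)"
      using that assms by (intro powr_mono2) auto
    then have "1 \<le> a powr (1 - d) * s powr (d - 1)"
      using assms powr_minus_divide[of a "d - 1"] by (simp add: le_divide_eq)
    then have "1 \<le> ennreal (a powr (1 - d)) * ennreal (s powr (d - 1))"
      by (simp add: ennreal_mult'[symmetric])
    then show ?thesis
      using mult_right_mono[of 1 _ "h s"] by simp
  qed
  then have "(\<integral>\<^sup>+ s. h s * indicator {a..b} s \<partial>lborel) \<le>
      (\<integral>\<^sup>+ s. ennreal (a powr (1 - d)) * (ennreal (s powr (d - 1)) * h s * indicator {0<..} s) \<partial>lborel)"
    using \<open>0 < a\<close> by (intro nn_integral_mono) (auto split: split_indicator simp: mult.assoc)
  also have "\<dots> = ennreal (a powr (1 - d)) * (\<integral>\<^sup>+ s. h s \<partial>mu d)"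
    by (subst nn_integral_cmult) (auto simp: nn_integral_mu)
  finally show ?thesis .
qed

lemma enn_powr_ennreal: "0 \<le> x \<Longrightarrow> enn_powr (ennreal x) a = ennreal (x powr a)"
  unfolding enn_powr_def by simp

lemma enn_powr_top [simp]: "enn_powr top a = top"
  unfolding enn_powr_def by simp

lemma enn_powr_mono:
  assumes "x \<le> y" "0 \<le> a"
  shows "enn_powr x a \<le> enn_powr y a"
proof (cases y)
  case (real yr)
  with assms obtain xr where "x = ennreal xr" "0 \<le> xr" "xr \<le> yr"
    by (cases x) (auto simp: top_unique)
  then show ?thesis
    using real assms by (simp add: enn_powr_ennreal powr_mono2)
qed simp

lemma enn_powr_zero [simp]: "enn_powr 0 a = 0"
  unfolding enn_powr_def by simp

lemma enn_powr_one [simp]: "enn_powr x 1 = x"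
  unfolding enn_powr_def by (cases x) auto

lemma Lp_norm_one: "Lp_norm M 1 g = (\<integral>\<^sup>+ x. g x \<partial>M)"
  unfolding Lp_norm_def by simp

lemma Lp_norm_top_eq_esssup: "g \<in> borel_measurable M \<Longrightarrow> Lp_norm M \<infinity> g = esssup M g"
  unfolding Lp_norm_def by (simp add: esssup_eq_AE)

definition tail_integral :: "'a measure \<Rightarrow> ('a \<Rightarrow> real) \<Rightarrow> real \<Rightarrow> ennreal" where
  "tail_integral M g lam = (\<integral>\<^sup>+ x. ennreal (g x) * indicator {x. lam < g x} x \<partial>M)"

lemma tail_integral_le_nn_integral: "tail_integral M g lam \<le> (\<integral>\<^sup>+ x. ennreal (g x) \<partial>M)"
  unfolding tail_integral_def by (intro nn_integral_mono) (simp split: split_indicator)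

lemma tail_integral_eq_0: "AE x in M. g x \<le> lam \<Longrightarrow> tail_integral M g lam = 0"
  unfolding tail_integral_def
  by (subst nn_integral_cong_AE[where v = "\<lambda>_. 0"]) (auto elim!: eventually_mono split: split_indicator)

lemma tail_integral_le_powr:
  assumes [measurable]: "g \<in> borel_measurable M" and "0 < lam" "1 \<le> P"
    and "(\<integral>\<^sup>+ x. ennreal (g x powr P) \<partial>M) \<le> ennreal c"
  shows "tail_integral M g lam \<le> ennreal (lam powr (1 - P) * c)"
proof -
  have "ennreal (g x) * indicator {x. lam < g x} x \<le> ennreal (lam powr (1 - P)) * ennreal (g x powr P)" for x
  proof (cases "lam < g x")
    case True
    have "g x = g x powr P * g x powr (1 - P)"
      using True \<open>0 < lam\<close> by (simp add: powr_add[symmetric])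
    also have "\<dots> \<le> g x powr P * lam powr (1 - P)"
      using True assms by (intro mult_left_mono powr_mono2') auto
    finally show ?thesis
      using True by (simp add: ennreal_mult'[symmetric] mult.commute ennreal_leI)
  qed simp
  then have "tail_integral M g lam \<le> (\<integral>\<^sup>+ x. ennreal (lam powr (1 - P)) * ennreal (g x powr P) \<partial>M)"
    unfolding tail_integral_def by (intro nn_integral_mono)
  also have "\<dots> = ennreal (lam powr (1 - P)) * (\<integral>\<^sup>+ x. ennreal (g x powr P) \<partial>M)"
    by (rule nn_integral_cmult) simp
  also have "\<dots> \<le> ennreal (lam powr (1 - P)) * ennreal c"
    using assms(4) by (rule mult_left_mono) simp
  finally show ?thesis
    by (simp add: ennreal_mult')
qed

lemma dyadic_bracket:
  fixes a x :: real
  assumes "0 < a" "a < x"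
  obtains j where "a * 2 ^ j < x" "x \<le> a * 2 ^ Suc j"
proof -
  obtain m where "x / a < 2 ^ m" using real_arch_pow[of 2 "x / a"] by auto
  then have ex: "\<exists>k. x \<le> a * 2 ^ k" using assms by (intro exI[of _ m]) (simp add: field_simps)
  define k where "k = (LEAST k. x \<le> a * 2 ^ k)"
  have "x \<le> a * 2 ^ k" unfolding k_def by (rule LeastI_ex[OF ex])
  moreover have "k \<noteq> 0" using \<open>x \<le> a * 2 ^ k\<close> assms by (intro notI) simp
  then obtain j where j: "k = Suc j" by (cases k) auto
  moreover have "a * 2 ^ j < x"
    using not_less_Least[of j "\<lambda>k. x \<le> a * 2 ^ k"] j unfolding k_def by simp
  ultimately show ?thesis using that by blast
qed

lemma geometric_sum_le_powr:
  fixes n x P :: real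
  assumes "n * 2 ^ j < x" "0 < n" "1 < P"
  defines "b \<equiv> 2 powr (P - 1)"
  shows "(\<Sum>k<Suc j. b ^ k) \<le> b / (b - 1) * (x / n) powr (P - 1)"
proof -
  have "1 < b" unfolding b_def using assms by simp
  have "(\<Sum>k<Suc j. b ^ k) = (b * b ^ j - 1) / (b - 1)"
    using geometric_sum[of b "Suc j"] \<open>1 < b\<close> by simp
  also have "\<dots> \<le> b / (b - 1) * b ^ j"
    using \<open>1 < b\<close> divide_right_mono[of "b * b ^ j - 1" "b * b ^ j" "b - 1"] by simp
  also have "\<dots> \<le> b / (b - 1) * (x / n) powr (P - 1)"
  proof -
    have "b ^ j = (2 ^ j) powr (P - 1)"
      unfolding b_def by (simp add: powr_realpow[symmetric] powr_powr powr_power mult.commute)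
    also have "\<dots> \<le> (x / n) powr (P - 1)"
      using assms by (intro powr_mono2) (auto simp: field_simps)
    finally show ?thesis
      using \<open>1 < b\<close> by (intro mult_left_mono) auto
  qed
  finally show ?thesis .
qed

lemma suminf_dyadic_powers_below_le:
  fixes n x P :: real
  assumes "0 < n" "1 < P"
  defines "b \<equiv> 2 powr (P - 1)"
  shows "(\<Sum>k. if n * 2 ^ k < x then ennreal (b ^ k) else 0) \<le> ennreal (b / (b - 1) * (x / n) powr (P - 1))"
proof (cases "n < x")
  case True
  have "1 < b" unfolding b_def using assms by simp
  obtain j where j: "n * 2 ^ j < x" "x \<le> n * 2 ^ Suc j"
    using dyadic_bracket[OF \<open>0 < n\<close> True] by blast
  have below_iff: "n * 2 ^ k < x \<longleftrightarrow> k < Suc j" for k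
  proof
    assume "n * 2 ^ k < x"
    with j(2) have "n * 2 ^ k < n * 2 ^ Suc j"
      by linarith
    then show "k < Suc j"
      using \<open>0 < n\<close> power_strict_increasing_iff[of "2::real" k "Suc j"] by simp
  next
    assume "k < Suc j"
    then have "n * 2 ^ k \<le> n * 2 ^ j"
      using \<open>0 < n\<close> by simp
    with j(1) show "n * 2 ^ k < x"
      by linarith
  qed
  have geometric_le: "(\<Sum>k<Suc j. b ^ k) \<le> b / (b - 1) * (x / n) powr (P - 1)"
    unfolding b_def using j(1) assms by (intro geometric_sum_le_powr)
  have "(\<Sum>k. if n * 2 ^ k < x then ennreal (b ^ k) else 0) = (\<Sum>k<Suc j. if n * 2 ^ k < x then ennreal (b ^ k) else 0)"
    by (rule suminf_finite) (simp_all add: below_iff)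
  also have "\<dots> = (\<Sum>k<Suc j. ennreal (b ^ k))"
    by (rule sum.cong) (simp_all add: below_iff)
  also have "\<dots> = ennreal (\<Sum>k<Suc j. b ^ k)"
    by (rule sum_ennreal) (use \<open>1 < b\<close> in simp)
  finally show ?thesis
    using geometric_le by (simp add: ennreal_leI)
next
  case False
  have "n * 1 \<le> n * 2 ^ k" for k
    using \<open>0 < n\<close> by (intro mult_left_mono) auto
  with False have "\<not> n * 2 ^ k < x" for k
    by (metis mult_1_right order.strict_trans1)
  then show ?thesis
    by simp
qed

lemma suminf_tail_integral_dyadic_le:
  assumes [measurable]: "g \<in> borel_measurable M" and nonneg: "\<And>x. 0 \<le> g x" and "0 < n" "1 < P"
  defines "b \<equiv> 2 powr (P - 1)"
  shows "(\<Sum>k. ennreal (b ^ k) * tail_integral M g (n * 2 ^ k))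
    \<le> ennreal (b / (b - 1) * n powr (1 - P)) * (\<integral>\<^sup>+ x. ennreal (g x powr P) \<partial>M)"
proof -
  have b1: "1 < b" unfolding b_def using assms by simp
  have pointwise: "(\<Sum>k. ennreal (b ^ k) * (ennreal (g x) * indicator {x. n * 2 ^ k < g x} x))
      \<le> ennreal (b / (b - 1) * n powr (1 - P)) * ennreal (g x powr P)" for x
  proof -
    have "(\<Sum>k. ennreal (b ^ k) * (ennreal (g x) * indicator {x. n * 2 ^ k < g x} x))
        = (\<Sum>k. ennreal (g x) * (if n * 2 ^ k < g x then ennreal (b ^ k) else 0))"
      by (intro suminf_cong) (simp add: indicator_def mult.commute)
    also have "\<dots> = ennreal (g x) * (\<Sum>k. if n * 2 ^ k < g x then ennreal (b ^ k) else 0)"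
      by (rule ennreal_suminf_cmult)
    also have "\<dots> \<le> ennreal (g x) * ennreal (b / (b - 1) * (g x / n) powr (P - 1))"
      unfolding b_def by (intro mult_left_mono suminf_dyadic_powers_below_le) (use assms nonneg in auto)
    also have "\<dots> = ennreal (b / (b - 1) * n powr (1 - P)) * ennreal (g x powr P)"
    proof (cases "g x = 0")
      case False
      then have "g x * g x powr (P - 1) = g x powr P"
        using nonneg[of x] by (simp add: powr_add[symmetric] powr_diff)
      moreover have "n powr (1 - P) = 1 / n powr (P - 1)"
        using powr_minus_divide[of n "P - 1"] by simp
      ultimately have "g x * (g x / n) powr (P - 1) = n powr (1 - P) * g x powr P"
        using nonneg[of x] \<open>0 < n\<close> by (simp add: powr_divide)
      then show ?thesis
        using b1 nonneg[of x] by (simp add: ennreal_mult'[symmetric] mult_ac)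
    qed simp
    finally show ?thesis .
  qed
  have "(\<Sum>k. ennreal (b ^ k) * tail_integral M g (n * 2 ^ k))
      = (\<integral>\<^sup>+ x. (\<Sum>k. ennreal (b ^ k) * (ennreal (g x) * indicator {x. n * 2 ^ k < g x} x)) \<partial>M)"
    unfolding tail_integral_def by (subst nn_integral_suminf) (auto intro!: suminf_cong nn_integral_cmult[symmetric])
  also have "\<dots> \<le> (\<integral>\<^sup>+ x. ennreal (b / (b - 1) * n powr (1 - P)) * ennreal (g x powr P) \<partial>M)"
    by (intro nn_integral_mono pointwise)
  also have "\<dots> = ennreal (b / (b - 1) * n powr (1 - P)) * (\<integral>\<^sup>+ x. ennreal (g x powr P) \<partial>M)"
    by (rule nn_integral_cmult) simp
  finally show ?thesis .
qed

(* For 0 < r < 4/3, 1 <= t <= 2 and 3 r / 2 <= t, the interval [t - r, t + r] lies in [1/3, 10/3]. *)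
definition window :: "(real \<Rightarrow> real) \<Rightarrow> real \<Rightarrow> real" where
  "window f s = \<bar>f s\<bar> * indicator {1/3..10/3} s"

lemma borel_measurable_window [measurable]: "f \<in> borel_measurable borel \<Longrightarrow> window f \<in> borel_measurable borel"
  unfolding window_def by (intro borel_measurable_times borel_measurable_abs) auto

lemma window_nonneg: "0 \<le> window f s"
  unfolding window_def by simp

lemma R2_eq_0_outside: "r \<le> 0 \<or> 4/3 \<le> r \<Longrightarrow> R2 f r = 0"
  unfolding R2_def by (auto simp: indicator_def intro!: antisym SUP_least)

lemma R2_le_tail_integral:
  assumes [measurable]: "f \<in> borel_measurable borel" and "0 \<le> lam"
  shows "R2 f r \<le> ennreal (2 * lam) + ennreal (1 / r) * tail_integral lborel (window f) lam"
    (is "_ \<le> _ + _ * ?G")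
proof (cases "0 < r \<and> r < 4/3")
  case True
  have "ennreal (1 / r) * (\<integral>\<^sup>+ s\<in>{t - r..t + r}. ennreal \<bar>f s\<bar> \<partial>lborel) \<le> ennreal (2 * lam) + ennreal (1 / r) * ?G"
    if t: "1 \<le> t" "t \<le> 2" "3 * r / 2 \<le> t" for t
  proof -
    have "(\<integral>\<^sup>+ s\<in>{t - r..t + r}. ennreal \<bar>f s\<bar> \<partial>lborel) \<le>
        (\<integral>\<^sup>+ s. ennreal lam * indicator {t - r..t + r} s +
           ennreal (window f s) * indicator {s. lam < window f s} s \<partial>lborel)"
      using t True \<open>0 \<le> lam\<close>
      by (intro nn_integral_mono) (auto simp: window_def split: split_indicator intro: ennreal_leI)
    also have "\<dots> = ennreal (2 * r * lam) + ?G"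
      using True \<open>0 \<le> lam\<close>
      by (subst nn_integral_add) (auto simp: nn_integral_cmult_indicator tail_integral_def ennreal_mult' mult_ac)
    finally have "ennreal (1 / r) * (\<integral>\<^sup>+ s\<in>{t - r..t + r}. ennreal \<bar>f s\<bar> \<partial>lborel) \<le>
        ennreal (1 / r) * (ennreal (2 * r * lam) + ?G)"
      by (rule mult_left_mono) simp
    also have "\<dots> = ennreal (2 * lam) + ennreal (1 / r) * ?G"
      using True \<open>0 \<le> lam\<close> by (simp add: distrib_left ennreal_mult'[symmetric])
    finally show ?thesis .
  qed
  then show ?thesis
    unfolding R2_def using True by (auto intro!: SUP_least)
qed (use R2_eq_0_outside[of r f] in auto)

lemma R2_le_integral_window:
  assumes [measurable]: "f \<in> borel_measurable borel"
  shows "R2 f r \<le> indicator {0<..<4/3} r * ennreal (1 / r) * (\<integral>\<^sup>+ s. ennreal (window f s) \<partial>lborel)"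
proof (cases "0 < r \<and> r < 4/3")
  case True
  have "R2 f r \<le> ennreal (1 / r) * tail_integral lborel (window f) 0"
    using R2_le_tail_integral[OF assms order_refl] by simp
  also have "\<dots> \<le> ennreal (1 / r) * (\<integral>\<^sup>+ s. ennreal (window f s) \<partial>lborel)"
    by (intro mult_left_mono tail_integral_le_nn_integral) simp
  finally show ?thesis
    using True by simp
qed (use R2_eq_0_outside[of r f] in auto)

lemma nn_integral_window_powr_le:
  assumes [measurable]: "f \<in> borel_measurable borel" and "0 < P" "1 \<le> d"
  shows "(\<integral>\<^sup>+ s. ennreal (window f s powr P) \<partial>lborel) \<le> ennreal (3 powr (d - 1)) * (\<integral>\<^sup>+ s. ennreal (\<bar>f s\<bar> powr P) \<partial>mu d)"
proof -
  have "(\<integral>\<^sup>+ s. ennreal (window f s powr P) \<partial>lborel) = (\<integral>\<^sup>+ s. ennreal (\<bar>f s\<bar> powr P) * indicator {1/3..10/3} s \<partial>lborel)"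
    using \<open>0 < P\<close> by (intro nn_integral_cong) (simp add: window_def split: split_indicator)
  also have "\<dots> \<le> ennreal ((1/3) powr (1 - d)) * (\<integral>\<^sup>+ s. ennreal (\<bar>f s\<bar> powr P) \<partial>mu d)"
    using assms by (intro nn_integral_Icc_le_mu) auto
  also have "(1/3::real) powr (1 - d) = 3 powr (d - 1)"
    by (simp add: powr_divide powr_minus_divide[symmetric])
  finally show ?thesis .
qed

lemma R2_eq_0_if_window_null:
  assumes [measurable]: "f \<in> borel_measurable borel" and "0 < P"
    and "(\<integral>\<^sup>+ s. ennreal (window f s powr P) \<partial>lborel) = 0"
  shows "R2 f r = 0"
proof -
  have "AE s in lborel. window f s \<le> 0"
    using assms(3) by (subst (asm) nn_integral_0_iff_AE) (auto elim!: eventually_mono)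
  then have "R2 f r \<le> 0"
    using R2_le_tail_integral[OF assms(1) order_refl, of r] by (simp add: tail_integral_eq_0)
  then show ?thesis
    by simp
qed

lemma R2_le_of_AE_le:
  assumes [measurable]: "f \<in> borel_measurable borel" and "AE x in mu d. ennreal \<bar>f x\<bar> \<le> C"
  shows "R2 f r \<le> 2 * C"
proof (cases C)
  case (real c)
  have "AE s in lborel. 0 < s \<longrightarrow> \<bar>f s\<bar> \<le> c"
    using AE_lborel_of_AE_mu[OF assms(2)] real by (auto elim!: eventually_mono)
  then have "AE s in lborel. window f s \<le> c"
    using \<open>0 \<le> c\<close> by (auto elim!: eventually_mono simp: window_def split: split_indicator)
  then have "R2 f r \<le> ennreal (2 * c)"
    using R2_le_tail_integral[OF assms(1) \<open>0 \<le> c\<close>] by (simp add: tail_integral_eq_0)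
  then show ?thesis
    using real by (simp add: ennreal_mult)
qed (simp add: ennreal_mult_top)

lemma Lp_norm_top_R2_le:
  assumes [measurable]: "f \<in> borel_measurable borel"
  shows "Lp_norm (mu d) \<infinity> (R2 f) \<le> 2 * Lp_norm (mu d) \<infinity> (\<lambda>x. ennreal \<bar>f x\<bar>)"
proof -
  have norm_f: "Lp_norm (mu d) \<infinity> (\<lambda>x. ennreal \<bar>f x\<bar>) = esssup (mu d) (\<lambda>x. ennreal \<bar>f x\<bar>)"
    by (intro Lp_norm_top_eq_esssup borel_measurable_mu) simp
  have "R2 f r \<le> 2 * esssup (mu d) (\<lambda>x. ennreal \<bar>f x\<bar>)" for r
    using esssup_AE by (rule R2_le_of_AE_le[OF assms])
  then show ?thesis
    unfolding norm_f by (auto simp: Lp_norm_def intro!: Inf_lower)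
qed

lemma nn_integral_R2_le:
  assumes [measurable]: "f \<in> borel_measurable borel" and "1 < d"
  shows "(\<integral>\<^sup>+ r. R2 f r \<partial>mu d) \<le> ennreal (3 powr (d - 1) * ((4/3) powr (d - 1) / (d - 1))) * (\<integral>\<^sup>+ s. ennreal \<bar>f s\<bar> \<partial>mu d)"
proof -
  let ?W = "\<integral>\<^sup>+ s. ennreal (window f s) \<partial>lborel"
  have "(\<integral>\<^sup>+ r. R2 f r \<partial>mu d) \<le> (\<integral>\<^sup>+ r. ?W * (ennreal (r powr -1) * indicator {0<..<4/3} r) \<partial>mu d)"
    using R2_le_integral_window[OF assms(1)]
    by (intro nn_integral_mono) (auto simp: powr_neg_one mult_ac split: split_indicator)
  also have "\<dots> = ?W * (\<integral>\<^sup>+ r. ennreal (r powr -1) * indicator {0<..<4/3} r \<partial>mu d)"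
    by (intro nn_integral_cmult borel_measurable_mu) simp
  also have "\<dots> \<le> ennreal (3 powr (d - 1)) * (\<integral>\<^sup>+ s. ennreal \<bar>f s\<bar> \<partial>mu d) * ennreal ((4/3) powr (d - 1) / (d - 1))"
  proof (intro mult_mono)
    show "?W \<le> ennreal (3 powr (d - 1)) * (\<integral>\<^sup>+ s. ennreal \<bar>f s\<bar> \<partial>mu d)"
      using nn_integral_window_powr_le[OF assms(1), of 1 d] \<open>1 < d\<close> by (simp add: window_nonneg)
    show "(\<integral>\<^sup>+ r. ennreal (r powr -1) * indicator {0<..<4/3} r \<partial>mu d) \<le> ennreal ((4/3) powr (d - 1) / (d - 1))"
      using nn_integral_mu_Ioo_powr[of "4/3" d "-1"] \<open>1 < d\<close> by simp
  qed auto
  also have "\<dots> = ennreal (3 powr (d - 1) * ((4/3) powr (d - 1) / (d - 1))) * (\<integral>\<^sup>+ s. ennreal \<bar>f s\<bar> \<partial>mu d)"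
    by (subst ennreal_mult) (use \<open>1 < d\<close> in \<open>auto simp: mult_ac\<close>)
  finally show ?thesis .
qed

lemma R2_weak_type_window_le:
  assumes [measurable]: "f \<in> borel_measurable borel" and "1 \<le> d" "0 < lam"
  shows "ennreal lam * enn_powr (emeasure (mu d) {r \<in> space (mu d). R2 f r > ennreal lam}) (1 / d)
    \<le> (\<integral>\<^sup>+ s. ennreal (window f s) \<partial>lborel)"
proof (cases "\<integral>\<^sup>+ s. ennreal (window f s) \<partial>lborel")
  case (real w)
  have "{r \<in> space (mu d). R2 f r > ennreal lam} \<subseteq> {0<..<w / lam}"
  proof
    fix r assume "r \<in> {r \<in> space (mu d). R2 f r > ennreal lam}"
    then have "0 < r" and lam_less: "ennreal lam < R2 f r" by auto
    have "R2 f r \<le> indicator {0<..<4/3} r * ennreal (1 / r) * ennreal w"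
      using R2_le_integral_window[OF assms(1), of r] real by simp
    also have "\<dots> \<le> ennreal (w / r)"
      using real by (simp add: ennreal_mult'[symmetric] split: split_indicator)
    finally have "R2 f r \<le> ennreal (w / r)" .
    with lam_less have "ennreal lam < ennreal (w / r)"
      by (rule order.strict_trans2)
    then show "r \<in> {0<..<w / lam}"
      using \<open>0 < r\<close> \<open>0 < lam\<close> by (simp add: ennreal_less_iff field_simps)
  qed
  then have "emeasure (mu d) {r \<in> space (mu d). R2 f r > ennreal lam} \<le> emeasure (mu d) {0<..<w / lam}"
    by (rule emeasure_mono) (auto intro: sets_mu)
  also have "\<dots> \<le> ennreal ((w / lam) powr d / d)"
    using real assms by (intro emeasure_mu_Ioo_le) auto
  also have "\<dots> \<le> ennreal ((w / lam) powr d)"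
    using \<open>1 \<le> d\<close> by (intro ennreal_leI) (simp add: divide_le_eq mult_le_cancel_left1)
  finally have "enn_powr (emeasure (mu d) {r \<in> space (mu d). R2 f r > ennreal lam}) (1 / d)
      \<le> enn_powr (ennreal ((w / lam) powr d)) (1 / d)"
    using \<open>1 \<le> d\<close> by (intro enn_powr_mono) auto
  also have "\<dots> = ennreal (w / lam)"
    using real assms by (simp add: enn_powr_ennreal powr_powr)
  finally show ?thesis
    using real \<open>0 < lam\<close> mult_left_mono[of _ _ "ennreal lam"] by (fastforce simp: ennreal_mult'[symmetric])
qed simp

lemma R2_weak_type_le:
  assumes [measurable]: "f \<in> borel_measurable borel" and "1 \<le> d" "0 < lam"
  shows "ennreal lam * enn_powr (emeasure (mu d) {r \<in> space (mu d). R2 f r > ennreal lam}) (1 / d)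
    \<le> ennreal (3 powr (d - 1)) * (\<integral>\<^sup>+ s. ennreal \<bar>f s\<bar> \<partial>mu d)"
  using R2_weak_type_window_le[OF assms] nn_integral_window_powr_le[OF assms(1), of 1 d] assms
  by (simp add: window_nonneg)

lemma radius_less_of_R2_gt:
  assumes [measurable]: "f \<in> borel_measurable borel" and "0 < lam" "0 \<le> g"
    and tail: "tail_integral lborel (window f) lam = ennreal g" and R2_gt: "ennreal (4 * lam) < R2 f r"
  shows "r < g / (2 * lam)"
proof -
  have "0 < r"
    using R2_gt R2_eq_0_outside[of r f] by (cases "r \<le> 0") auto
  have "ennreal (4 * lam) < ennreal (2 * lam) + ennreal (1 / r) * ennreal g"
    using R2_gt R2_le_tail_integral[OF assms(1), of lam r] \<open>0 < lam\<close> tail by simp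
  then have "4 * lam < 2 * lam + g / r"
    using \<open>0 < r\<close> \<open>0 < lam\<close> \<open>0 \<le> g\<close>
    by (simp add: ennreal_mult'[symmetric] ennreal_plus[symmetric] ennreal_less_iff del: ennreal_plus)
  then show ?thesis
    using \<open>0 < r\<close> \<open>0 < lam\<close> by (simp add: field_simps)
qed

lemma R2_powr_le_dyadic_layers:
  assumes [measurable]: "f \<in> borel_measurable borel" and "0 < n" "0 < Q"
    and tail: "\<And>k. tail_integral lborel (window f) (n * 2 ^ k) = ennreal (g k)" and "\<And>k. 0 \<le> g k"
  shows "enn_powr (R2 f r) Q \<le> ennreal ((4 * n) powr Q) * indicator {0<..<4/3} r
    + (\<Sum>k. ennreal ((8 * n * 2 ^ k) powr Q) * indicator {0<..<g k / (2 * (n * 2 ^ k))} r)"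
    (is "_ \<le> _ + suminf ?layer")
proof (cases "0 < r \<and> r < 4/3")
  case True
  have "R2 f r \<le> ennreal (2 * n) + ennreal (1 / r) * ennreal (g 0)"
    using R2_le_tail_integral[OF assms(1), of n r] tail[of 0] \<open>0 < n\<close> by simp
  then obtain h where h: "R2 f r = ennreal h" "0 \<le> h"
    by (cases "R2 f r") (auto simp: top_unique ennreal_mult_eq_top_iff)
  show ?thesis
  proof (cases "h \<le> 4 * n")
    case True
    then have "enn_powr (R2 f r) Q \<le> ennreal ((4 * n) powr Q)"
      using h \<open>0 < Q\<close> by (simp add: enn_powr_ennreal ennreal_leI powr_mono2)
    then show ?thesis
      using \<open>0 < r \<and> r < 4/3\<close> by (simp add: add_increasing2)
  next
    case False
    obtain j where j: "4 * n * 2 ^ j < h" "h \<le> 4 * n * 2 ^ Suc j"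
      by (rule dyadic_bracket[of "4 * n" h]) (use False \<open>0 < n\<close> in auto)
    have "0 < 4 * n * 2 ^ j"
      using \<open>0 < n\<close> by simp
    with j(1) have "ennreal (4 * (n * 2 ^ j)) < R2 f r"
      unfolding h(1) by (intro ennreal_lessI) (simp_all add: mult_ac)
    then have "r < g j / (2 * (n * 2 ^ j))"
      using \<open>0 < n\<close> assms(5) by (intro radius_less_of_R2_gt[OF assms(1) _ _ tail]) auto
    then have "enn_powr (R2 f r) Q \<le> ?layer j"
      using j h True \<open>0 < Q\<close> by (auto simp: enn_powr_ennreal intro!: ennreal_leI powr_mono2)
    also have "\<dots> \<le> suminf ?layer"
      using ennreal_suminf_lessD[of ?layer "?layer j" j] by (auto simp: not_le[symmetric])
    finally show ?thesis
      by (simp add: add_increasing)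
  qed
next
  case False
  then show ?thesis
    using R2_eq_0_outside[of r f] by auto
qed

lemma nn_integral_mu_layers_le:
  assumes "0 < d" "0 \<le> a" "\<And>k. 0 \<le> b k"
  shows "(\<integral>\<^sup>+ r. c * indicator {0<..<a} r + (\<Sum>k. e k * indicator {0<..<b k} r) \<partial>mu d)
    \<le> c * ennreal (a powr d / d) + (\<Sum>k. e k * ennreal (b k powr d / d))"
proof -
  have [measurable]: "(\<lambda>r. x * indicator {0<..<y} r) \<in> borel_measurable (mu d)" for x :: ennreal and y :: real
    by (intro borel_measurable_mu) simp
  have [simp]: "{0<..<y} \<in> sets (mu d)" for y :: real
    by (intro sets_mu) auto
  have "(\<integral>\<^sup>+ r. c * indicator {0<..<a} r + (\<Sum>k. e k * indicator {0<..<b k} r) \<partial>mu d)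
      = c * emeasure (mu d) {0<..<a} + (\<Sum>k. e k * emeasure (mu d) {0<..<b k})"
    by (simp add: nn_integral_add nn_integral_suminf nn_integral_cmult_indicator sets_mu)
  also have "\<dots> \<le> c * ennreal (a powr d / d) + (\<Sum>k. e k * ennreal (b k powr d / d))"
    using assms by (intro add_mono mult_left_mono suminf_le summableI emeasure_mu_Ioo_le) auto
  finally show ?thesis .
qed

(* The only place where Q <= P d is used. *)
lemma layer_term_le:
  fixes n u P Q d g :: real
  assumes "0 < n" "1 \<le> u" "1 \<le> d" "Q \<le> P * d" "0 \<le> g" "g \<le> (n * u) powr (1 - P) * n powr P"
  shows "(8 * n * u) powr Q * ((g / (2 * (n * u))) powr d / d) \<le> 8 powr Q * n powr (Q - 1) * u powr (P - 1) * g"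
proof -
  define a where "a = g / (2 * (n * u))"
  have "0 < n * u" using assms by simp
  have a_nonneg: "0 \<le> a" and a_le: "a \<le> g / (n * u)"
    unfolding a_def using assms \<open>0 < n * u\<close> by (auto simp: frac_le)
  have "g / (n * u) \<le> (n * u) powr (1 - P) * n powr P / (n * u)"
    using assms \<open>0 < n * u\<close> by (simp add: divide_right_mono)
  also have "\<dots> = u powr (- P)"
    using assms by (simp add: powr_mult powr_diff powr_minus_divide field_simps)
  finally have a_le_u: "a \<le> u powr (- P)" using a_le by simp
  have "a powr d / d \<le> a powr d"
    using assms by (simp add: divide_le_eq mult_le_cancel_left1)
  also have "a powr d = a powr (d - 1) * a"
    using a_nonneg by (cases "a = 0") (auto simp: powr_diff)
  also have "\<dots> \<le> (u powr (- P)) powr (d - 1) * (g / (n * u))"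
    using a_nonneg a_le a_le_u assms by (intro mult_mono powr_mono2) auto
  finally have "a powr d / d \<le> u powr (- P * (d - 1)) * (g / (n * u))"
    by (simp add: powr_powr)
  then have "(8 * n * u) powr Q * (a powr d / d) \<le> (8 * n * u) powr Q * (u powr (- P * (d - 1)) * (g / (n * u)))"
    by (rule mult_left_mono) simp
  also have "\<dots> = 8 powr Q * (n powr Q / n) * (u powr Q * u powr (- P * (d - 1)) / u) * g"
    using assms by (simp add: powr_mult field_simps)
  also have "\<dots> = 8 powr Q * n powr (Q - 1) * u powr (Q - P * (d - 1) - 1) * g"
    using assms by (simp add: powr_diff powr_add[symmetric])
  also have "\<dots> \<le> 8 powr Q * n powr (Q - 1) * u powr (P - 1) * g"
    using assms by (intro mult_right_mono mult_left_mono powr_mono) (auto simp: algebra_simps)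
  finally show ?thesis unfolding a_def .
qed

lemma suminf_layer_measures_le:
  fixes P Q d n :: real
  assumes [measurable]: "f \<in> borel_measurable borel" and "1 \<le> d" "1 < P" "Q \<le> P * d" "0 < n"
    and window_le: "(\<integral>\<^sup>+ s. ennreal (window f s powr P) \<partial>lborel) \<le> ennreal (n powr P)"
    and tail: "\<And>k. tail_integral lborel (window f) (n * 2 ^ k) = ennreal (g k)" and g_nonneg: "\<And>k. 0 \<le> g k"
  defines "b \<equiv> 2 powr (P - 1)"
  shows "(\<Sum>k. ennreal ((8 * n * 2 ^ k) powr Q) * ennreal ((g k / (2 * (n * 2 ^ k))) powr d / d))
    \<le> ennreal (8 powr Q * (b / (b - 1)) * n powr Q)"
proof -
  have "1 < b" unfolding b_def using assms by simp
  have g_le: "g k \<le> (n * 2 ^ k) powr (1 - P) * n powr P" for k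
    using tail_integral_le_powr[of "window f" lborel "n * 2 ^ k" P "n powr P"] window_le assms
    by (simp add: tail ennreal_le_iff)
  have "(\<Sum>k. ennreal ((8 * n * 2 ^ k) powr Q) * ennreal ((g k / (2 * (n * 2 ^ k))) powr d / d))
      \<le> (\<Sum>k. ennreal (8 powr Q * n powr (Q - 1)) * (ennreal (b ^ k) * tail_integral lborel (window f) (n * 2 ^ k)))"
  proof (intro suminf_le summableI)
    fix k
    have "(8 * n * 2 ^ k) powr Q * ((g k / (2 * (n * 2 ^ k))) powr d / d) \<le> 8 powr Q * n powr (Q - 1) * (2 ^ k) powr (P - 1) * g k"
      using assms g_nonneg g_le by (intro layer_term_le) auto
    also have "(2 ^ k) powr (P - 1) = b ^ k"
      unfolding b_def by (simp add: powr_realpow[symmetric] powr_powr powr_power mult.commute)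
    finally show "ennreal ((8 * n * 2 ^ k) powr Q) * ennreal ((g k / (2 * (n * 2 ^ k))) powr d / d)
        \<le> ennreal (8 powr Q * n powr (Q - 1)) * (ennreal (b ^ k) * tail_integral lborel (window f) (n * 2 ^ k))"
      using \<open>1 < b\<close> g_nonneg[of k] by (simp add: tail ennreal_mult'[symmetric] ennreal_leI mult_ac)
  qed
  also have "\<dots> = ennreal (8 powr Q * n powr (Q - 1)) * (\<Sum>k. ennreal (b ^ k) * tail_integral lborel (window f) (n * 2 ^ k))"
    by (rule ennreal_suminf_cmult)
  also have "\<dots> \<le> ennreal (8 powr Q * n powr (Q - 1)) *
      (ennreal (b / (b - 1) * n powr (1 - P)) * (\<integral>\<^sup>+ s. ennreal (window f s powr P) \<partial>lborel))"
    unfolding b_def using assms by (intro mult_left_mono suminf_tail_integral_dyadic_le) (auto simp: window_nonneg)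
  also have "\<dots> \<le> ennreal (8 powr Q * n powr (Q - 1)) * (ennreal (b / (b - 1) * n powr (1 - P)) * ennreal (n powr P))"
    by (intro mult_left_mono window_le) simp_all
  also have "\<dots> = ennreal (8 powr Q * (b / (b - 1)) * n powr Q)"
    using \<open>1 < b\<close> \<open>0 < n\<close> by (simp add: ennreal_mult'[symmetric] powr_diff powr_add[symmetric])
  finally show ?thesis .
qed

(* The first summand bounds the bottom layer, where R2 f <= 4 n on (0, 4/3); the second the dyadic layers. *)
definition dyadic_layer_const :: "real \<Rightarrow> real \<Rightarrow> real \<Rightarrow> real" where
  "dyadic_layer_const P Q d = 4 powr Q * ((4/3) powr d / d) + 8 powr Q * (2 powr (P - 1) / (2 powr (P - 1) - 1))"

lemma dyadic_layer_const_pos: "1 < P \<Longrightarrow> 0 < d \<Longrightarrow> 0 < dyadic_layer_const P Q d"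
  unfolding dyadic_layer_const_def by (intro add_pos_pos mult_pos_pos divide_pos_pos) auto

lemma nn_integral_R2_powr_le:
  fixes P Q d n :: real
  assumes [measurable]: "f \<in> borel_measurable borel" and "1 < d" "1 < P" "P \<le> Q" "Q \<le> P * d" "0 < n"
    and window_le: "(\<integral>\<^sup>+ s. ennreal (window f s powr P) \<partial>lborel) \<le> ennreal (n powr P)"
  shows "(\<integral>\<^sup>+ r. enn_powr (R2 f r) Q \<partial>mu d) \<le> ennreal (dyadic_layer_const P Q d * n powr Q)"
proof -
  have "1 < 2 powr (P - 1)"
    using assms by simp
  define g where "g k = enn2real (tail_integral lborel (window f) (n * 2 ^ k))" for k
  have "tail_integral lborel (window f) (n * 2 ^ k) < \<infinity>" for k
    using tail_integral_le_powr[of "window f" lborel "n * 2 ^ k" P "n powr P"] window_le assms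
    by (simp add: le_less_trans)
  then have tail: "tail_integral lborel (window f) (n * 2 ^ k) = ennreal (g k)" for k
    unfolding g_def by simp
  have g_nonneg: "0 \<le> g k" for k
    unfolding g_def by simp
  have "(\<integral>\<^sup>+ r. enn_powr (R2 f r) Q \<partial>mu d) \<le> (\<integral>\<^sup>+ r. ennreal ((4 * n) powr Q) * indicator {0<..<4/3} r
      + (\<Sum>k. ennreal ((8 * n * 2 ^ k) powr Q) * indicator {0<..<g k / (2 * (n * 2 ^ k))} r) \<partial>mu d)"
    using assms tail g_nonneg by (intro nn_integral_mono R2_powr_le_dyadic_layers) auto
  also have "\<dots> \<le> ennreal ((4 * n) powr Q) * ennreal ((4/3) powr d / d)
      + (\<Sum>k. ennreal ((8 * n * 2 ^ k) powr Q) * ennreal ((g k / (2 * (n * 2 ^ k))) powr d / d))"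
    using assms g_nonneg by (intro nn_integral_mu_layers_le) auto
  also have "\<dots> \<le> ennreal ((4 * n) powr Q) * ennreal ((4/3) powr d / d)
      + ennreal (8 powr Q * (2 powr (P - 1) / (2 powr (P - 1) - 1)) * n powr Q)"
    using assms tail g_nonneg by (intro add_left_mono suminf_layer_measures_le) auto
  also have "\<dots> = ennreal (4 powr Q * ((4/3) powr d / d) * n powr Q)
      + ennreal (8 powr Q * (2 powr (P - 1) / (2 powr (P - 1) - 1)) * n powr Q)"
    using assms by (simp add: powr_mult ennreal_mult'[symmetric] mult_ac)
  also have "\<dots> = ennreal (dyadic_layer_const P Q d * n powr Q)"
    unfolding dyadic_layer_const_def distrib_right using \<open>1 < 2 powr (P - 1)\<close> \<open>1 < d\<close>
    by (intro ennreal_plus[symmetric] mult_nonneg_nonneg divide_nonneg_nonneg) auto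
  finally show ?thesis .
qed

lemma nn_integral_R2_powr_root_le:
  fixes P Q d i :: real
  assumes [measurable]: "f \<in> borel_measurable borel" and "1 < d" "1 < P" "P \<le> Q" "Q \<le> P * d"
    and norm_f: "(\<integral>\<^sup>+ x. ennreal (\<bar>f x\<bar> powr P) \<partial>mu d) = ennreal i" and "0 \<le> i"
  shows "enn_powr (\<integral>\<^sup>+ r. enn_powr (R2 f r) Q \<partial>mu d) (1 / Q)
    \<le> ennreal (dyadic_layer_const P Q d powr (1 / Q) * 3 powr ((d - 1) / P) * i powr (1 / P))"
proof -
  define K where "K = dyadic_layer_const P Q d"
  have "0 < Q" "0 < K"
    unfolding K_def using assms by (auto intro: dyadic_layer_const_pos)
  have window_le: "(\<integral>\<^sup>+ s. ennreal (window f s powr P) \<partial>lborel) \<le> ennreal (3 powr (d - 1) * i)"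
    using nn_integral_window_powr_le[of f P d] assms by (simp add: ennreal_mult)
  show ?thesis
  proof (cases "i = 0")
    case True
    then have "R2 f r = 0" for r
      using window_le assms by (intro R2_eq_0_if_window_null[of f P]) auto
    then show ?thesis
      by simp
  next
    case False
    define n where "n = (3 powr (d - 1) * i) powr (1 / P)"
    have "0 < n" "n powr P = 3 powr (d - 1) * i"
      unfolding n_def using False assms by (auto simp: powr_powr)
    then have "(\<integral>\<^sup>+ r. enn_powr (R2 f r) Q \<partial>mu d) \<le> ennreal (K * n powr Q)"
      unfolding K_def using window_le assms by (intro nn_integral_R2_powr_le) auto
    then have "enn_powr (\<integral>\<^sup>+ r. enn_powr (R2 f r) Q \<partial>mu d) (1 / Q) \<le> enn_powr (ennreal (K * n powr Q)) (1 / Q)"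
      using \<open>0 < Q\<close> by (intro enn_powr_mono) auto
    also have "\<dots> = ennreal (K powr (1 / Q) * 3 powr ((d - 1) / P) * i powr (1 / P))"
      using \<open>0 < Q\<close> \<open>0 < n\<close> \<open>0 < K\<close> \<open>0 \<le> i\<close>
      by (simp add: enn_powr_ennreal powr_mult powr_powr n_def)
    finally show ?thesis
      unfolding K_def .
  qed
qed

lemma Lp_norm_R2_le:
  fixes P Q d :: real
  assumes [measurable]: "f \<in> borel_measurable borel" and "1 < d" "1 < P" "P \<le> Q" "Q \<le> P * d"
  shows "Lp_norm (mu d) (ennreal Q) (R2 f)
    \<le> ennreal (dyadic_layer_const P Q d powr (1 / Q) * 3 powr ((d - 1) / P)) * Lp_norm (mu d) (ennreal P) (\<lambda>x. ennreal \<bar>f x\<bar>)"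
proof -
  have norm_R2: "Lp_norm (mu d) (ennreal Q) (R2 f) = enn_powr (\<integral>\<^sup>+ r. enn_powr (R2 f r) Q \<partial>mu d) (1 / Q)"
    using assms by (simp add: Lp_norm_def)
  have norm_f: "Lp_norm (mu d) (ennreal P) (\<lambda>x. ennreal \<bar>f x\<bar>) = enn_powr (\<integral>\<^sup>+ x. ennreal (\<bar>f x\<bar> powr P) \<partial>mu d) (1 / P)"
    using assms by (simp add: Lp_norm_def enn_powr_ennreal)
  have "0 < dyadic_layer_const P Q d"
    using assms by (intro dyadic_layer_const_pos) auto
  then show ?thesis
  proof (cases "\<integral>\<^sup>+ x. ennreal (\<bar>f x\<bar> powr P) \<partial>mu d")
    case (real i)
    then show ?thesis
      unfolding norm_R2 norm_f using nn_integral_R2_powr_root_le[OF assms real(2,1)]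
      by (simp add: enn_powr_ennreal ennreal_mult'[symmetric])
  qed (simp add: norm_f ennreal_mult_top)
qed

lemma R2_strong_type:
  fixes d :: real and p q :: ennreal
  assumes "1 < d" "1 < p" "p \<le> q" "q \<le> p * ennreal d"
  shows "\<exists>C<\<infinity>. \<forall>f. f \<in> borel_measurable borel \<longrightarrow>
    Lp_norm (mu d) q (R2 f) \<le> C * Lp_norm (mu d) p (\<lambda>x. ennreal \<bar>f x\<bar>)"
proof (cases p)
  case (real P)
  with assms have "q \<le> ennreal (P * d)"
    by (simp add: ennreal_mult)
  then obtain Q where Q: "q = ennreal Q" "Q \<le> P * d"
    using real assms by (cases q) (auto simp: top_unique)
  with assms real have "1 < P" "P \<le> Q"
    by (auto simp: ennreal_le_iff2)
  then show ?thesis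
    unfolding real Q(1) using Lp_norm_R2_le[OF _ assms(1) _ _ Q(2)]
    by (intro exI[of _ "ennreal (dyadic_layer_const P Q d powr (1 / Q) * 3 powr ((d - 1) / P))"]) auto
next
  case top
  with assms have "q = \<infinity>"
    by (simp add: top_unique)
  with top show ?thesis
    using Lp_norm_top_R2_le by (intro exI[of _ 2]) auto
qed

theorem lemma2p3:
  fixes d :: real and p q :: ennreal
  assumes "d > 1" and "1 < p" and "p \<le> q" and "q \<le> p * ennreal d"
  shows "(\<exists>C < \<infinity>. \<forall>f :: real \<Rightarrow> real. f \<in> borel_measurable borel \<longrightarrow>
            Lp_norm (mu d) p (\<lambda>x. ennreal \<bar>f x\<bar>) < \<infinity> \<longrightarrow>
            Lp_norm (mu d) q (R2 f) \<le> C * Lp_norm (mu d) p (\<lambda>x. ennreal \<bar>f x\<bar>))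
       \<and> (\<exists>C < \<infinity>. \<forall>f :: real \<Rightarrow> real. f \<in> borel_measurable borel \<longrightarrow>
            Lp_norm (mu d) 1 (\<lambda>x. ennreal \<bar>f x\<bar>) < \<infinity> \<longrightarrow>
            Lp_norm (mu d) 1 (R2 f) \<le> C * Lp_norm (mu d) 1 (\<lambda>x. ennreal \<bar>f x\<bar>))
       \<and> (\<exists>C < \<infinity>. \<forall>f :: real \<Rightarrow> real. f \<in> borel_measurable borel \<longrightarrow>
            Lp_norm (mu d) 1 (\<lambda>x. ennreal \<bar>f x\<bar>) < \<infinity> \<longrightarrow>
            (\<forall>lam::real. lam > 0 \<longrightarrow>
               ennreal lam * enn_powr (emeasure (mu d) {r \<in> space (mu d). R2 f r > ennreal lam}) (1 / d)
                 \<le> C * Lp_norm (mu d) 1 (\<lambda>x. ennreal \<bar>f x\<bar>)))"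
proof -
  have "\<exists>C<\<infinity>. \<forall>f. f \<in> borel_measurable borel \<longrightarrow>
      Lp_norm (mu d) 1 (R2 f) \<le> C * Lp_norm (mu d) 1 (\<lambda>x. ennreal \<bar>f x\<bar>)"
    using nn_integral_R2_le[OF _ assms(1)]
    by (intro exI[of _ "ennreal (3 powr (d - 1) * ((4/3) powr (d - 1) / (d - 1)))"]) (auto simp: Lp_norm_one)
  moreover have "\<exists>C<\<infinity>. \<forall>f. f \<in> borel_measurable borel \<longrightarrow> (\<forall>lam>0.
      ennreal lam * enn_powr (emeasure (mu d) {r \<in> space (mu d). R2 f r > ennreal lam}) (1 / d)
        \<le> C * Lp_norm (mu d) 1 (\<lambda>x. ennreal \<bar>f x\<bar>))"
    using R2_weak_type_le assms(1)
    by (intro exI[of _ "ennreal (3 powr (d - 1))"]) (auto simp: Lp_norm_one)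
  ultimately show ?thesis
    using R2_strong_type[OF assms] by blast
qed

end
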